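(* Let $N\ge3$ and suppose $k_m\ge1$ for all $0\le m\le r-1$. Then a function $f$ on $\mathcal{V}_{N,{\bf k}}$ satisfies $L_{N,{\bf k}}f=Nf$ if and only if $Pf=\frac{1}{N-1}f$; that is, the eigenspace of the graph Laplacian $L_{N,{\bf k}}$ for the eigenvalue $N$ coincides with the eigenspace of $P$ for the eigenvalue $1/(N-1)$.
   Context: Fix $N\ge3$, $r\ge2$, distinct reals $e_0,\dots,e_{r-1}$, and ${\bf k}=(k_0,\dots,k_{r-1})$ of nonnegative integers with $\sum_m k_m=N$. The multislice $\mathcal{V}_{N,{\bf k}}$ is the set of $x\in\{e_0,\dots,e_{r-1}\}^N$ with exactly $k_m$ coordinates equal to $e_m$ for each $m$, and $\mu_{N,{\bf k}}$ is the uniform probability measure on it. For $i<j$, $\pi_{i,j}x$ swaps coordinates $i$ and $j$. The graph Laplacian is $L_{N,{\bf k}}f(x)=\sum_{y}(f(x)-f(y))$, the sum over all $y\neq x$ of the form $y=\pi_{i,j}x$. For $1\le\ell\le N$, $P_\ell$ is the orthogonal projection in $L^2(\mu_{N,{\bf k}})$ onto functions depending only on $x_\ell$ (i.e. $P_\ell f(x)$ is the average of $f(y)$ over $y\in\mathcal{V}_{N,{\bf k}}$ with $y_\ell=x_\ell$), and $P=\frac1N\sum_{\ell=1}^N P_\ell$. *)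

theory Defs
  imports Complex_Main "HOL-Library.FuncSet"
begin

text \<open>Coordinates are indexed by 0..N-1 (the paper uses 1..N); configurations are
  extensional functions nat => real, equal to undefined outside {0..<N}.\<close>

definition multislice :: "nat \<Rightarrow> nat \<Rightarrow> (nat \<Rightarrow> real) \<Rightarrow> (nat \<Rightarrow> nat) \<Rightarrow> (nat \<Rightarrow> real) set" where
  "multislice N r e k = {x \<in> {0..<N} \<rightarrow>\<^sub>E e ` {0..<r}.
      \<forall>m<r. card {i \<in> {0..<N}. x i = e m} = k m}"

definition swapc :: "nat \<Rightarrow> nat \<Rightarrow> (nat \<Rightarrow> real) \<Rightarrow> (nat \<Rightarrow> real)" where
  "swapc i j x = x(i := x j, j := x i)"

definition neighbours :: "nat \<Rightarrow> (nat \<Rightarrow> real) \<Rightarrow> (nat \<Rightarrow> real) set" where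
  "neighbours N x = {y. y \<noteq> x \<and> (\<exists>i j. i < j \<and> j < N \<and> y = swapc i j x)}"

definition laplacian :: "nat \<Rightarrow> ((nat \<Rightarrow> real) \<Rightarrow> real) \<Rightarrow> (nat \<Rightarrow> real) \<Rightarrow> real" where
  "laplacian N f x = (\<Sum>y \<in> neighbours N x. f x - f y)"

definition proj1 :: "nat \<Rightarrow> nat \<Rightarrow> (nat \<Rightarrow> real) \<Rightarrow> (nat \<Rightarrow> nat) \<Rightarrow> nat
    \<Rightarrow> ((nat \<Rightarrow> real) \<Rightarrow> real) \<Rightarrow> (nat \<Rightarrow> real) \<Rightarrow> real" where
  "proj1 N r e k l f x =
     (let S = {y \<in> multislice N r e k. y l = x l} in (\<Sum>y\<in>S. f y) / real (card S))"

definition projP :: "nat \<Rightarrow> nat \<Rightarrow> (nat \<Rightarrow> real) \<Rightarrow> (nat \<Rightarrow> nat)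
    \<Rightarrow> ((nat \<Rightarrow> real) \<Rightarrow> real) \<Rightarrow> (nat \<Rightarrow> real) \<Rightarrow> real" where
  "projP N r e k f x = (1 / real N) * (\<Sum>l<N. proj1 N r e k l f x)"

end

(*
  Let X be a multislice on n coordinates, P_l the conditional mean given coordinate l, and
  D(u) four times the Dirichlet form <u, L u>. The key is the Poincare inequality
  4 n Var(u) <= D(u), i.e. spectral gap n, proved by induction on n. The fibres of P_l are
  multislices on n - 1 coordinates, so the induction hypothesis on them, summed over l, gives
    (1)  4 (n - 1) (n |u|^2 - S) <= (n - 2) D(u),      S = sum_l |P_l u|^2.
  For centred u write P_l u = F_l(x_l). Since sum_c F_l'(x_c) is invariant under
  rearrangement, (n - 1) <P_l u, P_l' u> = - <F_l(x_a), F_l'(x_a)> for l ~= l' and any fixed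
  coordinate a, and therefore
    (2)  |(n - 1) sum_l P_l u - n u|^2 <= n (n |u|^2 - (n - 1) S).
  Thus (n - 1) S <= n |u|^2, which with (1) closes the induction. For an eigenfunction with
  L u = n u we have D(u) = 4 n |u|^2, so (1) gives the reverse inequality and (2) forces
  (n - 1) sum_l P_l u = n u, i.e. P u = u / (n - 1). Conversely, such a u is a sum of
  one-coordinate functions with vanishing coordinate sums, and L acts on each of them as
  multiplication by n.
*)

theory Submission
  imports Defs "HOL-Combinatorics.Transposition"
begin

section \<open>Rearrangement classes\<close>

text \<open>A multislice on an arbitrary finite index set; the fibres of a coordinate are again of
  this form, which drives the induction on the number of coordinates.\<close>

definition rearrangements :: "nat set \<Rightarrow> (nat \<Rightarrow> real) \<Rightarrow> (nat \<Rightarrow> real) set" where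
  "rearrangements I x0 =
     {y. (\<forall>i. i \<notin> I \<longrightarrow> y i = x0 i) \<and> (\<forall>v. card {i\<in>I. y i = v} = card {i\<in>I. x0 i = v})}"

abbreviation swap_pair :: "nat \<times> nat \<Rightarrow> (nat \<Rightarrow> real) \<Rightarrow> (nat \<Rightarrow> real)" where
  "swap_pair p \<equiv> swapc (fst p) (snd p)"

lemma swapc_eq_comp_transpose: "swapc i j x = x \<circ> transpose i j"
  by (auto simp: swapc_def transpose_def)

lemma swapc_swapc [simp]: "swapc i j (swapc i j x) = x"
  by (rule ext) (simp add: swapc_def)

lemma swapc_commute: "swapc j i = swapc i j"
  by (rule ext)+ (simp add: swapc_def)

lemma swapc_eq_self_iff: "swapc i j x = x \<longleftrightarrow> x i = x j"
  by (auto simp: swapc_def fun_eq_iff)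

lemma rearrangements_refl: "x0 \<in> rearrangements I x0"
  by (simp add: rearrangements_def)

lemma rearrangements_range:
  assumes "finite I" "y \<in> rearrangements I x0" "i \<in> I"
  shows "y i \<in> x0 ` I"
proof -
  have "card {k\<in>I. y k = y i} > 0" using assms by (auto simp: card_gt_0_iff)
  then have "card {k\<in>I. x0 k = y i} > 0" using assms(2) by (simp add: rearrangements_def)
  then show ?thesis by (force simp: card_gt_0_iff)
qed

lemma finite_rearrangements:
  assumes "finite I"
  shows "finite (rearrangements I x0)"
proof -
  have "inj_on (\<lambda>y. restrict y I) (rearrangements I x0)"
    by (rule inj_onI) (auto simp: rearrangements_def fun_eq_iff restrict_def split: if_splits, metis)
  moreover have "(\<lambda>y. restrict y I) ` rearrangements I x0 \<subseteq> I \<rightarrow>\<^sub>E x0 ` I"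
    using rearrangements_range[OF assms] by auto
  moreover have "finite (I \<rightarrow>\<^sub>E x0 ` I)" using assms by (simp add: finite_PiE)
  ultimately show ?thesis
    by (meson finite_imageD finite_subset)
qed

lemma swapc_rearrangements:
  assumes "i \<in> I" "j \<in> I" "y \<in> rearrangements I x0"
  shows "swapc i j y \<in> rearrangements I x0"
proof -
  have "transpose i j k \<in> I" if "k \<in> I" for k
    using assms that by (simp add: transpose_def)
  then have "{k\<in>I. swapc i j y k = v} = transpose i j ` {k\<in>I. y k = v}" for v
    by (auto simp: swapc_eq_comp_transpose in_transpose_image_iff)
  then have "card {k\<in>I. swapc i j y k = v} = card {k\<in>I. y k = v}" for v
    by (simp add: card_image)
  then show ?thesis using assms by (auto simp: rearrangements_def swapc_def)
qed

lemma sum_rearrangements_swapc: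
  assumes "i \<in> I" "j \<in> I"
  shows "(\<Sum>x\<in>rearrangements I x0. h (swapc i j x)) = (\<Sum>x\<in>rearrangements I x0. h x)"
  by (rule sum.reindex_bij_witness[where i="swapc i j" and j="swapc i j"])
     (auto intro: swapc_rearrangements[OF assms])

lemma sum_rearrangements_coord:
  assumes "a \<in> I" "b \<in> I"
  shows "(\<Sum>x\<in>rearrangements I x0. \<psi> (x a)) = (\<Sum>x\<in>rearrangements I x0. \<psi> (x b))"
  using sum_rearrangements_swapc[OF assms, of "\<lambda>x. \<psi> (x b)"] by (simp add: swapc_def)

lemma sum_rearrangements_coord2:
  assumes "a \<in> I" "b \<in> I" "c \<in> I" "b \<noteq> a" "c \<noteq> a"
  shows "(\<Sum>x\<in>rearrangements I x0. \<psi> (x a) (x b)) = (\<Sum>x\<in>rearrangements I x0. \<psi> (x a) (x c))"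
  using sum_rearrangements_swapc[OF assms(2,3), of "\<lambda>x. \<psi> (x a) (x c)"] assms(4,5)
  by (simp add: swapc_def)

lemma card_filter_remove:
  assumes "finite I" "l \<in> I"
  shows "card {i\<in>I. y i = v} = card {i\<in>I - {l}. y i = v} + (if y l = v then 1 else 0)"
proof -
  have "{i\<in>I. y i = v} =
      (if y l = v then insert l {i\<in>I - {l}. y i = v} else {i\<in>I - {l}. y i = v})"
    using assms by auto
  then show ?thesis using assms by auto
qed

lemma rearrangements_fiber:
  assumes "finite I" "l \<in> I" "x \<in> rearrangements I x0"
  shows "{y \<in> rearrangements I x0. y l = x l} = rearrangements (I - {l}) x"
proof
  show "{y \<in> rearrangements I x0. y l = x l} \<subseteq> rearrangements (I - {l}) x"
  proof
    fix y assume y: "y \<in> {y \<in> rearrangements I x0. y l = x l}"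
    have "card {i\<in>I - {l}. y i = v} = card {i\<in>I - {l}. x i = v}" for v
      using y assms card_filter_remove[OF assms(1,2), of y v] card_filter_remove[OF assms(1,2), of x v]
      by (auto simp: rearrangements_def)
    then show "y \<in> rearrangements (I - {l}) x" using y assms by (auto simp: rearrangements_def)
  qed
next
  show "rearrangements (I - {l}) x \<subseteq> {y \<in> rearrangements I x0. y l = x l}"
  proof
    fix y assume y: "y \<in> rearrangements (I - {l}) x"
    then have yl: "y l = x l" by (simp add: rearrangements_def)
    have "card {i\<in>I. y i = v} = card {i\<in>I. x0 i = v}" for v
      using y assms yl card_filter_remove[OF assms(1,2), of y v] card_filter_remove[OF assms(1,2), of x v]
      by (auto simp: rearrangements_def)
    then show "y \<in> {y \<in> rearrangements I x0. y l = x l}"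
      using y assms yl by (auto simp: rearrangements_def)
  qed
qed

lemma sum_coords_rearrangement:
  fixes \<psi> :: "real \<Rightarrow> real"
  assumes "finite I" "x \<in> rearrangements I x0"
  shows "(\<Sum>c\<in>I. \<psi> (x c)) = (\<Sum>c\<in>I. \<psi> (x0 c))"
proof -
  have grouped: "(\<Sum>c\<in>I. \<psi> (y c)) = (\<Sum>v\<in>x0 ` I. \<psi> v * card {c\<in>I. y c = v})"
    if "y \<in> rearrangements I x0" for y
  proof -
    have "(\<Sum>c\<in>I. \<psi> (y c)) = (\<Sum>v\<in>x0 ` I. \<Sum>c\<in>{c\<in>I. y c = v}. \<psi> (y c))"
      by (rule sum.group[symmetric]) (use assms rearrangements_range[OF assms(1) that] in auto)
    also have "\<dots> = (\<Sum>v\<in>x0 ` I. \<psi> v * card {c\<in>I. y c = v})"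
      by (rule sum.cong) auto
    finally show ?thesis .
  qed
  show ?thesis
    using grouped[OF assms(2)] grouped[OF rearrangements_refl] assms(2)
    by (simp add: rearrangements_def)
qed

section \<open>Conditional means and the Dirichlet form\<close>

definition fiber_mean :: "(nat \<Rightarrow> real) set \<Rightarrow> nat \<Rightarrow> ((nat \<Rightarrow> real) \<Rightarrow> real) \<Rightarrow> real \<Rightarrow> real" where
  "fiber_mean X l u v = (\<Sum>y\<in>{y\<in>X. y l = v}. u y) / card {y\<in>X. y l = v}"

definition cond_mean :: "(nat \<Rightarrow> real) set \<Rightarrow> nat \<Rightarrow> ((nat \<Rightarrow> real) \<Rightarrow> real) \<Rightarrow> (nat \<Rightarrow> real) \<Rightarrow> real" where
  "cond_mean X l u x = fiber_mean X l u (x l)"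

lemma sum_cond_mean:
  assumes "finite X"
  shows "(\<Sum>x\<in>X. cond_mean X l u x) = (\<Sum>x\<in>X. u x)"
proof -
  let ?c = "\<lambda>v. real (card {z\<in>X. z l = v})"
  let ?h = "\<lambda>x y. if y l = x l then u y / ?c (y l) else 0"
  have "cond_mean X l u x = (\<Sum>y\<in>X. ?h x y)" for x
  proof -
    have "cond_mean X l u x = (\<Sum>y\<in>{y\<in>X. y l = x l}. u y / ?c (x l))"
      by (simp add: cond_mean_def fiber_mean_def sum_divide_distrib)
    also have "\<dots> = (\<Sum>y\<in>X. if y l = x l then u y / ?c (x l) else 0)"
      using assms by (simp add: sum.inter_filter)
    finally show ?thesis by (auto intro: sum.cong)
  qed
  then have "(\<Sum>x\<in>X. cond_mean X l u x) = (\<Sum>x\<in>X. \<Sum>y\<in>X. ?h x y)"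
    by simp
  also have "\<dots> = (\<Sum>y\<in>X. \<Sum>x\<in>X. ?h x y)"
    by (rule sum.swap)
  also have "\<dots> = (\<Sum>y\<in>X. u y)"
  proof (rule sum.cong)
    fix y assume y: "y \<in> X"
    have "(\<Sum>x\<in>X. ?h x y) = (\<Sum>x\<in>{x\<in>X. x l = y l}. u y / ?c (y l))"
      by (subst sum.inter_filter[OF assms]) (rule sum.cong, auto)
    also have "\<dots> = u y"
      using y assms by (auto simp: card_gt_0_iff)
    finally show "(\<Sum>x\<in>X. ?h x y) = u y" .
  qed simp
  finally show ?thesis .
qed

lemma cond_mean_mult:
  "cond_mean X l (\<lambda>y. h y * cond_mean X l u y) x = cond_mean X l h x * cond_mean X l u x"
proof -
  have "(\<Sum>y\<in>{y\<in>X. y l = x l}. h y * cond_mean X l u y)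
      = (\<Sum>y\<in>{y\<in>X. y l = x l}. h y * cond_mean X l u x)"
    by (rule sum.cong) (auto simp: cond_mean_def)
  then show ?thesis
    by (simp add: cond_mean_def[of X l "\<lambda>y. h y * cond_mean X l u y"] fiber_mean_def
        flip: sum_distrib_right) (simp add: cond_mean_def fiber_mean_def)
qed

lemma sum_mult_cond_mean:
  assumes "finite X"
  shows "(\<Sum>x\<in>X. u x * cond_mean X l u x) = (\<Sum>x\<in>X. (cond_mean X l u x)^2)"
  using sum_cond_mean[OF assms, of l "\<lambda>y. u y * cond_mean X l u y"] cond_mean_mult[of X l u u]
  by (simp add: power2_eq_square)

lemma sum_sq_diff_cond_mean:
  assumes "finite X"
  shows "(\<Sum>x\<in>X. (u x - cond_mean X l u x)^2)
       = (\<Sum>x\<in>X. (u x)^2) - (\<Sum>x\<in>X. (cond_mean X l u x)^2)"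
proof -
  have "(\<Sum>x\<in>X. (u x - cond_mean X l u x)^2)
      = (\<Sum>x\<in>X. (u x)^2 - 2 * (u x * cond_mean X l u x) + (cond_mean X l u x)^2)"
    by (rule sum.cong) (auto simp: power2_eq_square algebra_simps)
  also have "\<dots> = (\<Sum>x\<in>X. (u x)^2) - 2 * (\<Sum>x\<in>X. u x * cond_mean X l u x)
                  + (\<Sum>x\<in>X. (cond_mean X l u x)^2)"
    by (simp add: sum.distrib sum_subtractf sum_distrib_left)
  finally show ?thesis using sum_mult_cond_mean[OF assms] by simp
qed

definition off_diag :: "nat set \<Rightarrow> (nat \<times> nat) set" where
  "off_diag I = {(i, j). i \<in> I \<and> j \<in> I \<and> i \<noteq> j}"

text \<open>Sum over ordered pairs, so this is four times the Dirichlet form of the Laplacian.\<close>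

definition dirichlet :: "nat set \<Rightarrow> (nat \<Rightarrow> real) set \<Rightarrow> ((nat \<Rightarrow> real) \<Rightarrow> real) \<Rightarrow> real" where
  "dirichlet I X u = (\<Sum>x\<in>X. \<Sum>p\<in>off_diag I. (u x - u (swap_pair p x))^2)"

definition sq_dev :: "(nat \<Rightarrow> real) set \<Rightarrow> ((nat \<Rightarrow> real) \<Rightarrow> real) \<Rightarrow> real" where
  "sq_dev X u = (\<Sum>x\<in>X. (u x - (\<Sum>z\<in>X. u z) / card X)^2)"

lemma finite_off_diag: "finite I \<Longrightarrow> finite (off_diag I)"
  by (rule finite_subset[of _ "I \<times> I"]) (auto simp: off_diag_def)

lemma sum_dirichlet_remove:
  assumes "finite I"
  shows "(\<Sum>l\<in>I. dirichlet (I - {l}) X u) = (real (card I) - 2) * dirichlet I X u"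
proof -
  let ?s = "\<lambda>x p. (u x - u (swap_pair p x))^2"
  have count: "(\<Sum>l\<in>I. if fst p \<noteq> l \<and> snd p \<noteq> l then ?s x p else 0) = (real (card I) - 2) * ?s x p"
    if p: "p \<in> off_diag I" for x p
  proof -
    have two: "{fst p, snd p} \<subseteq> I" "card {fst p, snd p} = 2" using p by (auto simp: off_diag_def)
    have "{l\<in>I. fst p \<noteq> l \<and> snd p \<noteq> l} = I - {fst p, snd p}" by auto
    then have "(\<Sum>l\<in>I. if fst p \<noteq> l \<and> snd p \<noteq> l then ?s x p else 0)
        = (\<Sum>l\<in>I - {fst p, snd p}. ?s x p)"
      by (simp add: sum.inter_filter[OF assms, symmetric])
    also have "card (I - {fst p, snd p}) = card I - 2"
      using two by (simp add: card_Diff_subset finite_subset[OF two(1) assms])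
    then have "(\<Sum>l\<in>I - {fst p, snd p}. ?s x p) = (real (card I) - 2) * ?s x p"
      using two card_mono[OF assms two(1)] by (simp add: of_nat_diff)
    finally show ?thesis .
  qed
  have "dirichlet (I - {l}) X u = (\<Sum>x\<in>X. \<Sum>p\<in>off_diag I. if fst p \<noteq> l \<and> snd p \<noteq> l then ?s x p else 0)" for l
  proof -
    have "off_diag (I - {l}) = {p \<in> off_diag I. fst p \<noteq> l \<and> snd p \<noteq> l}"
      by (auto simp: off_diag_def)
    then show ?thesis
      using finite_off_diag[OF assms] by (simp add: dirichlet_def sum.inter_filter)
  qed
  then have "(\<Sum>l\<in>I. dirichlet (I - {l}) X u)
      = (\<Sum>l\<in>I. \<Sum>x\<in>X. \<Sum>p\<in>off_diag I. if fst p \<noteq> l \<and> snd p \<noteq> l then ?s x p else 0)"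
    by simp
  also have "\<dots> = (\<Sum>x\<in>X. \<Sum>p\<in>off_diag I. \<Sum>l\<in>I. if fst p \<noteq> l \<and> snd p \<noteq> l then ?s x p else 0)"
    by (subst sum.swap) (rule sum.cong[OF refl], rule sum.swap)
  also have "\<dots> = (\<Sum>x\<in>X. \<Sum>p\<in>off_diag I. (real (card I) - 2) * ?s x p)"
    by (intro sum.cong refl count)
  also have "\<dots> = (real (card I) - 2) * dirichlet I X u"
    by (simp add: dirichlet_def sum_distrib_left)
  finally show ?thesis .
qed

section \<open>The Poincare inequality\<close>

text \<open>That is, the Laplacian of the rearrangement class has spectral gap at least \<open>card I\<close>.\<close>

definition poincare_holds :: "nat set \<Rightarrow> (nat \<Rightarrow> real) \<Rightarrow> ((nat \<Rightarrow> real) \<Rightarrow> real) \<Rightarrow> bool" where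
  "poincare_holds I x0 u \<longleftrightarrow>
     4 * real (card I) * sq_dev (rearrangements I x0) u \<le> dirichlet I (rearrangements I x0) u"

lemma real_card_remove:
  assumes "finite I" "l \<in> I"
  shows "real (card (I - {l})) = real (card I) - 1"
proof -
  have "card I > 0" using assms by (auto simp: card_gt_0_iff)
  then show ?thesis using assms by (simp add: of_nat_diff)
qed

lemma fiber_poincare:
  assumes "finite I" "l \<in> I" "X = rearrangements I x0"
    and fibers: "\<forall>x\<in>X. poincare_holds (I - {l}) x u"
  shows "4 * (real (card I) - 1) * (\<Sum>x\<in>X. (u x - cond_mean X l u x)^2) \<le> dirichlet (I - {l}) X u"
proof -
  define q where "q x = (\<Sum>p\<in>off_diag (I - {l}). (u x - u (swap_pair p x))^2)" for x
  define r where "r y = (u y - cond_mean X l u y)^2" for y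
  have fX: "finite X" using assms finite_rearrangements by simp
  have on_fiber: "4 * (real (card I) - 1) * cond_mean X l r x \<le> cond_mean X l q x"
    if x: "x \<in> X" for x
  proof -
    define F where "F = {y\<in>X. y l = x l}"
    have F: "F = rearrangements (I - {l}) x"
      using rearrangements_fiber[OF assms(1,2)] x assms(3) by (simp add: F_def)
    have cF: "real (card F) > 0" using x fX by (auto simp: F_def card_gt_0_iff)
    have mean: "(\<Sum>z\<in>F. u z) / card F = cond_mean X l u x"
      by (simp add: cond_mean_def fiber_mean_def F_def)
    have "sq_dev F u = (\<Sum>y\<in>F. r y)"
      unfolding sq_dev_def mean r_def by (rule sum.cong) (auto simp: F_def cond_mean_def)
    moreover have "4 * real (card (I - {l})) * sq_dev F u \<le> dirichlet (I - {l}) F u"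
      using fibers x F by (simp add: poincare_holds_def)
    ultimately have "4 * (real (card I) - 1) * (\<Sum>y\<in>F. r y) \<le> (\<Sum>y\<in>F. q y)"
      using real_card_remove[OF assms(1,2)] by (simp add: dirichlet_def q_def)
    then have "4 * (real (card I) - 1) * (\<Sum>y\<in>F. r y) / card F \<le> (\<Sum>y\<in>F. q y) / card F"
      using cF by (simp add: divide_right_mono)
    then show ?thesis by (simp add: cond_mean_def fiber_mean_def F_def)
  qed
  have "4 * (real (card I) - 1) * (\<Sum>x\<in>X. (u x - cond_mean X l u x)^2)
      = (\<Sum>x\<in>X. 4 * (real (card I) - 1) * cond_mean X l r x)"
    by (simp add: sum_cond_mean[OF fX] r_def flip: sum_distrib_left)
  also have "\<dots> \<le> (\<Sum>x\<in>X. cond_mean X l q x)"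
    by (rule sum_mono) (use on_fiber in auto)
  also have "\<dots> = dirichlet (I - {l}) X u"
    by (simp add: sum_cond_mean[OF fX] dirichlet_def q_def)
  finally show ?thesis .
qed

lemma cond_means_energy_bound:
  assumes "finite I" "X = rearrangements I x0"
    and fibers: "\<forall>l\<in>I. \<forall>x\<in>X. poincare_holds (I - {l}) x u"
  shows "4 * (real (card I) - 1) *
           (real (card I) * (\<Sum>x\<in>X. (u x)^2) - (\<Sum>l\<in>I. \<Sum>x\<in>X. (cond_mean X l u x)^2))
         \<le> (real (card I) - 2) * dirichlet I X u"
proof -
  have fX: "finite X" using assms finite_rearrangements by simp
  have "4 * (real (card I) - 1) *
          (real (card I) * (\<Sum>x\<in>X. (u x)^2) - (\<Sum>l\<in>I. \<Sum>x\<in>X. (cond_mean X l u x)^2))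
      = (\<Sum>l\<in>I. 4 * (real (card I) - 1) * (\<Sum>x\<in>X. (u x - cond_mean X l u x)^2))"
    by (simp add: sum_sq_diff_cond_mean[OF fX] sum_subtractf flip: sum_distrib_left)
  also have "\<dots> \<le> (\<Sum>l\<in>I. dirichlet (I - {l}) X u)"
    by (rule sum_mono) (use fiber_poincare[OF assms(1) _ assms(2)] fibers in auto)
  also have "\<dots> = (real (card I) - 2) * dirichlet I X u"
    by (rule sum_dirichlet_remove[OF assms(1)])
  finally show ?thesis .
qed

lemma sum_mult_sum_cond_means:
  assumes "finite X"
  shows "(\<Sum>x\<in>X. u x * (\<Sum>l\<in>I. cond_mean X l u x)) = (\<Sum>l\<in>I. \<Sum>x\<in>X. (cond_mean X l u x)^2)"
proof -
  have "(\<Sum>x\<in>X. u x * (\<Sum>l\<in>I. cond_mean X l u x)) = (\<Sum>x\<in>X. \<Sum>l\<in>I. u x * cond_mean X l u x)"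
    by (simp add: sum_distrib_left)
  also have "\<dots> = (\<Sum>l\<in>I. \<Sum>x\<in>X. u x * cond_mean X l u x)"
    by (rule sum.swap)
  finally show ?thesis by (simp add: sum_mult_cond_mean[OF assms])
qed

text \<open>Move coordinate \<open>l'\<close> to every \<open>c \<noteq> l\<close>; the total over all \<open>c\<close> is the
  same for every rearrangement (\<open>sum_coords_rearrangement\<close>).\<close>

lemma sum_cond_mean_cross:
  assumes "finite I" "X = rearrangements I x0" "(\<Sum>x\<in>X. u x) = 0"
    and "l \<in> I" "l' \<in> I" "l \<noteq> l'"
  shows "(real (card I) - 1) * (\<Sum>x\<in>X. cond_mean X l u x * cond_mean X l' u x)
         = - (\<Sum>x\<in>X. fiber_mean X l u (x l) * fiber_mean X l' u (x l))"
proof -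
  let ?F = "fiber_mean X l u" and ?G = "fiber_mean X l' u"
  let ?M = "\<Sum>x\<in>X. ?F (x l) * ?G (x l')"
  have fX: "finite X" using assms finite_rearrangements by simp
  define K where "K = (\<Sum>c\<in>I. ?G (x0 c))"
  have other_coords: "(\<Sum>c\<in>I - {l}. ?G (x c)) = K - ?G (x l)" if "x \<in> X" for x
    using sum.remove[OF assms(1,4), of "\<lambda>c. ?G (x c)"]
      sum_coords_rearrangement[OF assms(1), of x x0 ?G] that assms(2)
    by (simp add: K_def)
  have move: "?M = (\<Sum>x\<in>X. ?F (x l) * ?G (x c))" if "c \<in> I - {l}" for c
    using sum_rearrangements_coord2[of l I l' c "\<lambda>a b. ?F a * ?G b" x0] that assms by auto
  have "(real (card I) - 1) * ?M = (\<Sum>c\<in>I - {l}. ?M)"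
    by (simp add: real_card_remove[OF assms(1,4)])
  also have "\<dots> = (\<Sum>c\<in>I - {l}. \<Sum>x\<in>X. ?F (x l) * ?G (x c))"
    using move by (rule sum.cong[OF refl])
  also have "\<dots> = (\<Sum>x\<in>X. \<Sum>c\<in>I - {l}. ?F (x l) * ?G (x c))"
    by (rule sum.swap)
  also have "\<dots> = (\<Sum>x\<in>X. ?F (x l) * (K - ?G (x l)))"
    by (rule sum.cong) (auto simp: other_coords simp flip: sum_distrib_left)
  also have "\<dots> = K * (\<Sum>x\<in>X. ?F (x l)) - (\<Sum>x\<in>X. ?F (x l) * ?G (x l))"
    by (simp add: algebra_simps sum_subtractf sum_distrib_left)
  also have "(\<Sum>x\<in>X. ?F (x l)) = 0"
    using sum_cond_mean[OF fX, of l u] assms(3) by (simp add: cond_mean_def)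
  finally show ?thesis by (simp add: cond_mean_def)
qed

lemma sum_power2_sum:
  "(\<Sum>x\<in>X. (\<Sum>l\<in>I. c l x)^2) = (\<Sum>l\<in>I. \<Sum>l'\<in>I. \<Sum>x\<in>X. c l x * c l' x :: real)"
proof -
  have "(\<Sum>x\<in>X. (\<Sum>l\<in>I. c l x)^2) = (\<Sum>x\<in>X. \<Sum>l\<in>I. \<Sum>l'\<in>I. c l x * c l' x)"
    by (simp add: power2_eq_square sum_product)
  also have "\<dots> = (\<Sum>l\<in>I. \<Sum>x\<in>X. \<Sum>l'\<in>I. c l x * c l' x)"
    by (rule sum.swap)
  also have "\<dots> = (\<Sum>l\<in>I. \<Sum>l'\<in>I. \<Sum>x\<in>X. c l x * c l' x)"
    by (rule sum.cong[OF refl], rule sum.swap)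
  finally show ?thesis .
qed

lemma sum_sq_sum_cond_means_le:
  assumes "finite I" "X = rearrangements I x0" "(\<Sum>x\<in>X. u x) = 0"
  shows "(real (card I) - 1) * (\<Sum>x\<in>X. (\<Sum>l\<in>I. cond_mean X l u x)^2)
       \<le> real (card I) * (\<Sum>l\<in>I. \<Sum>x\<in>X. (cond_mean X l u x)^2)"
proof (cases "I = {}")
  case False
  then obtain a where a: "a \<in> I" by blast
  define n where "n = real (card I)"
  define B where "B l l' = (\<Sum>x\<in>X. fiber_mean X l u (x a) * fiber_mean X l' u (x a))" for l l'
  have diag: "(\<Sum>x\<in>X. (cond_mean X l u x)^2) = B l l" if "l \<in> I" for l
    using sum_rearrangements_coord[OF that a, of "\<lambda>v. fiber_mean X l u v * fiber_mean X l u v"] assms(2)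
    by (simp add: B_def cond_mean_def power2_eq_square)
  have inner: "(n - 1) * (\<Sum>x\<in>X. cond_mean X l u x * cond_mean X l' u x)
      = (if l = l' then n * B l l else 0) - B l l'" if "l \<in> I" "l' \<in> I" for l l'
  proof (cases "l = l'")
    case True
    then show ?thesis using diag[OF that(1)] by (simp add: power2_eq_square algebra_simps)
  next
    case False
    then show ?thesis
      using sum_cond_mean_cross[OF assms that False] assms(2)
        sum_rearrangements_coord[OF that(1) a, of "\<lambda>v. fiber_mean X l u v * fiber_mean X l' u v"]
      by (simp add: B_def n_def)
  qed
  have "(n - 1) * (\<Sum>x\<in>X. (\<Sum>l\<in>I. cond_mean X l u x)^2)
      = (\<Sum>l\<in>I. \<Sum>l'\<in>I. (n - 1) * (\<Sum>x\<in>X. cond_mean X l u x * cond_mean X l' u x))"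
    by (simp add: sum_power2_sum sum_distrib_left)
  also have "\<dots> = (\<Sum>l\<in>I. \<Sum>l'\<in>I. (if l = l' then n * B l l else 0) - B l l')"
    by (intro sum.cong refl) (simp add: inner)
  also have "\<dots> = n * (\<Sum>l\<in>I. B l l) - (\<Sum>l\<in>I. \<Sum>l'\<in>I. B l l')"
    by (simp add: sum_subtractf sum_distrib_left assms(1) cong: sum.cong)
  also have "(\<Sum>l\<in>I. \<Sum>l'\<in>I. B l l') = (\<Sum>x\<in>X. (\<Sum>l\<in>I. fiber_mean X l u (x a))^2)"
    by (simp add: B_def sum_power2_sum)
  finally show ?thesis
    using diag by (simp add: n_def sum_nonneg)
qed simp

lemma cond_means_deviation_bound:
  assumes "finite I" "I \<noteq> {}" "X = rearrangements I x0" "(\<Sum>x\<in>X. u x) = 0"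
  shows "(\<Sum>x\<in>X. ((real (card I) - 1) * (\<Sum>l\<in>I. cond_mean X l u x) - real (card I) * u x)^2)
       \<le> real (card I) * (real (card I) * (\<Sum>x\<in>X. (u x)^2)
                           - (real (card I) - 1) * (\<Sum>l\<in>I. \<Sum>x\<in>X. (cond_mean X l u x)^2))"
proof -
  define n where "n = real (card I)"
  define g where "g x = (\<Sum>l\<in>I. cond_mean X l u x)" for x
  define S where "S = (\<Sum>l\<in>I. \<Sum>x\<in>X. (cond_mean X l u x)^2)"
  have fX: "finite X" using assms finite_rearrangements by simp
  have n1: "n - 1 \<ge> 0" using assms(1,2) by (simp add: n_def Suc_leI card_gt_0_iff)
  have G: "(n - 1) * (\<Sum>x\<in>X. (g x)^2) \<le> n * S"
    using sum_sq_sum_cond_means_le[OF assms(1,3,4)] by (simp add: n_def g_def S_def)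
  have "(\<Sum>x\<in>X. ((n - 1) * g x - n * u x)^2)
      = (n - 1) * ((n - 1) * (\<Sum>x\<in>X. (g x)^2)) - 2 * (n - 1) * n * (\<Sum>x\<in>X. u x * g x)
        + n^2 * (\<Sum>x\<in>X. (u x)^2)"
    by (simp add: power2_eq_square algebra_simps sum.distrib sum_subtractf sum_distrib_left)
  also have "(\<Sum>x\<in>X. u x * g x) = S"
    using sum_mult_sum_cond_means[OF fX] by (simp add: g_def S_def)
  also have "(n - 1) * ((n - 1) * (\<Sum>x\<in>X. (g x)^2)) \<le> (n - 1) * (n * S)"
    by (rule mult_left_mono[OF G n1])
  finally show ?thesis
    by (simp add: n_def g_def S_def power2_eq_square algebra_simps)
qed

lemma poincare_step:
  assumes "finite I" "card I \<ge> 3"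
    and IH: "\<And>l x w. l \<in> I \<Longrightarrow> poincare_holds (I - {l}) x w"
  shows "poincare_holds I x0 u"
proof -
  define X where "X = rearrangements I x0"
  define w where "w x = u x - (\<Sum>z\<in>X. u z) / card X" for x
  define n where "n = real (card I)"
  define U where "U = (\<Sum>x\<in>X. (w x)^2)"
  define S where "S = (\<Sum>l\<in>I. \<Sum>x\<in>X. (cond_mean X l w x)^2)"
  have n3: "n \<ge> 3" using assms(2) by (simp add: n_def)
  have fX: "finite X" using assms(1) finite_rearrangements X_def by simp
  have "card X > 0" using fX rearrangements_refl[of x0 I] X_def by (auto simp: card_gt_0_iff)
  then have centred: "(\<Sum>x\<in>X. w x) = 0" by (simp add: w_def sum_subtractf)
  have energy: "4 * (n - 1) * (n * U - S) \<le> (n - 2) * dirichlet I X w"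
    using cond_means_energy_bound[OF assms(1) X_def] IH by (simp add: n_def U_def S_def)
  have "0 \<le> n * (n * U - (n - 1) * S)"
    using cond_means_deviation_bound[OF assms(1) _ X_def centred] assms(2)
      sum_nonneg[of X "\<lambda>x. ((n - 1) * (\<Sum>l\<in>I. cond_mean X l w x) - n * w x)^2"]
    by (fastforce simp: n_def U_def S_def)
  then have "(n - 1) * S \<le> n * U" using n3 by (simp add: zero_le_mult_iff)
  then have "(n - 2) * (4 * n * U) \<le> (n - 2) * dirichlet I X w"
    using energy by (simp add: algebra_simps)
  moreover have "dirichlet I X w = dirichlet I X u"
    by (simp add: dirichlet_def w_def)
  ultimately have "4 * n * U \<le> dirichlet I X u"
    using n3 by simp
  then show ?thesis
    by (simp add: poincare_holds_def sq_dev_def n_def U_def w_def X_def)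
qed

lemma rearrangements_pair:
  assumes "a \<noteq> b"
  shows "rearrangements {a, b} x0 = {x0, swapc a b x0}"
proof
  have count: "card {i\<in>{a, b}. y i = v} = (if y a = v then 1 else 0) + (if y b = v then 1 else 0)"
    for y :: "nat \<Rightarrow> real" and v
  proof -
    have "{i\<in>{a, b}. y i = v} = (if y a = v then {a} else {}) \<union> (if y b = v then {b} else {})"
      by auto
    then show ?thesis using assms by simp
  qed
  show "rearrangements {a, b} x0 \<subseteq> {x0, swapc a b x0}"
  proof
    fix y assume y: "y \<in> rearrangements {a, b} x0"
    then have c: "(if y a = v then 1 else 0) + (if y b = v then 1 else 0)
        = (if x0 a = v then 1 else 0) + (if x0 b = v then (1::nat) else 0)" for v
      by (simp add: rearrangements_def flip: count)
    have "y a = x0 a \<or> y a = x0 b" using c[of "y a"] by (auto split: if_split_asm)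
    moreover have "y b = x0 a \<or> y b = x0 b" using c[of "y b"] by (auto split: if_split_asm)
    ultimately have "(y a = x0 a \<and> y b = x0 b) \<or> (y a = x0 b \<and> y b = x0 a)"
      using c[of "x0 a"] c[of "x0 b"] by (auto split: if_split_asm)
    then show "y \<in> {x0, swapc a b x0}"
      using y by (auto simp: rearrangements_def swapc_def fun_eq_iff)
  qed
qed (simp add: rearrangements_refl swapc_rearrangements)

lemma poincare_two:
  assumes "card I = 2"
  shows "poincare_holds I x0 u"
proof -
  obtain a b where I: "I = {a, b}" "a \<noteq> b" using assms by (meson card_2_iff)
  define x1 where "x1 = swapc a b x0"
  have X: "rearrangements I x0 = {x0, x1}" using rearrangements_pair[OF I(2)] I(1) x1_def by simp
  have pairs: "off_diag I = {(a, b), (b, a)}" using I by (auto simp: off_diag_def)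
  show ?thesis
  proof (cases "x1 = x0")
    case True
    then show ?thesis using X by (simp add: poincare_holds_def sq_dev_def dirichlet_def sum_nonneg)
  next
    case False
    have "swapc a b x1 = x0" by (simp add: x1_def)
    then have "dirichlet I (rearrangements I x0) u = 4 * (u x0 - u x1)^2"
      using False I(2) by (simp add: dirichlet_def X pairs swapc_commute x1_def[symmetric] power2_commute)
    moreover have "sq_dev (rearrangements I x0) u = (u x0 - u x1)^2 / 2"
      using False by (simp add: sq_dev_def X power2_eq_square field_simps)
    ultimately show ?thesis using assms by (simp add: poincare_holds_def)
  qed
qed

theorem poincare_inequality:
  assumes "finite I" "card I \<ge> 2"
  shows "poincare_holds I x0 u"
proof -
  have "\<forall>I x0 u. finite I \<and> card I = n \<longrightarrow> poincare_holds I x0 u" if "n \<ge> 2" for n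
    using that
  proof (induction n rule: nat_induct_at_least)
    case base
    then show ?case using poincare_two by blast
  next
    case (Suc n)
    show ?case
    proof (intro allI impI)
      fix I :: "nat set" and x0 :: "nat \<Rightarrow> real" and u :: "(nat \<Rightarrow> real) \<Rightarrow> real"
      assume I: "finite I \<and> card I = Suc n"
      show "poincare_holds I x0 u"
        by (rule poincare_step) (use I Suc in auto)
    qed
  qed
  then show ?thesis using assms by blast
qed

section \<open>Eigenfunctions of the Laplacian\<close>

text \<open>Every transposition is counted twice, so this is twice the graph Laplacian.\<close>

definition pair_laplacian :: "nat set \<Rightarrow> ((nat \<Rightarrow> real) \<Rightarrow> real) \<Rightarrow> (nat \<Rightarrow> real) \<Rightarrow> real" where
  "pair_laplacian I u x = (\<Sum>p\<in>off_diag I. u x - u (swap_pair p x))"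

lemma sum_mult_pair_laplacian:
  assumes "X = rearrangements I x0"
  shows "(\<Sum>x\<in>X. u x * pair_laplacian I u x) = dirichlet I X u / 2"
proof -
  have pair: "(\<Sum>x\<in>X. u x * (u x - u (swap_pair p x))) = (\<Sum>x\<in>X. (u x - u (swap_pair p x))^2) / 2"
    if "p \<in> off_diag I" for p
  proof -
    have "(\<Sum>x\<in>X. u (swap_pair p x) * (u (swap_pair p x) - u x)) = (\<Sum>x\<in>X. u x * (u x - u (swap_pair p x)))"
      using sum_rearrangements_swapc[of "fst p" I "snd p" "\<lambda>x. u x * (u x - u (swap_pair p x))"]
        that assms by (auto simp: off_diag_def)
    moreover have "(\<Sum>x\<in>X. (u x - u (swap_pair p x))^2)
        = (\<Sum>x\<in>X. u x * (u x - u (swap_pair p x))) + (\<Sum>x\<in>X. u (swap_pair p x) * (u (swap_pair p x) - u x))"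
      by (simp add: sum.distrib[symmetric] power2_eq_square algebra_simps)
    ultimately show ?thesis by simp
  qed
  have "(\<Sum>x\<in>X. u x * pair_laplacian I u x) = (\<Sum>x\<in>X. \<Sum>p\<in>off_diag I. u x * (u x - u (swap_pair p x)))"
    by (simp add: pair_laplacian_def sum_distrib_left)
  also have "\<dots> = (\<Sum>p\<in>off_diag I. \<Sum>x\<in>X. u x * (u x - u (swap_pair p x)))"
    by (rule sum.swap)
  also have "\<dots> = (\<Sum>p\<in>off_diag I. \<Sum>x\<in>X. (u x - u (swap_pair p x))^2) / 2"
    by (simp add: pair sum_divide_distrib)
  also have "\<dots> = dirichlet I X u / 2"
    by (simp add: dirichlet_def sum.swap[of _ X])
  finally show ?thesis .
qed

lemma sum_pair_laplacian:
  assumes "X = rearrangements I x0"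
  shows "(\<Sum>x\<in>X. pair_laplacian I u x) = 0"
proof -
  have "(\<Sum>x\<in>X. u x - u (swap_pair p x)) = 0" if "p \<in> off_diag I" for p
    using sum_rearrangements_swapc[of "fst p" I "snd p" u] that assms
    by (auto simp: off_diag_def sum_subtractf)
  then show ?thesis
    unfolding pair_laplacian_def by (subst sum.swap) simp
qed

lemma pair_laplacian_coord:
  assumes "finite I" "l \<in> I"
  shows "pair_laplacian I (\<lambda>y. \<phi> (y l)) x = 2 * (\<Sum>j\<in>I - {l}. \<phi> (x l) - \<phi> (x j))"
proof -
  define \<alpha> where "\<alpha> j = \<phi> (x l) - \<phi> (x j)" for j
  have fO: "finite (off_diag I)" using assms finite_off_diag by simp
  have split: "\<phi> (x l) - \<phi> (swap_pair p x l)
      = (if fst p = l then \<alpha> (snd p) else 0) + (if snd p = l then \<alpha> (fst p) else 0)"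
    if "p \<in> off_diag I" for p
    using that by (auto simp: off_diag_def swapc_def \<alpha>_def)
  have "{p\<in>off_diag I. fst p = l} = (\<lambda>j. (l, j)) ` (I - {l})"
    using assms by (auto simp: off_diag_def)
  then have first: "(\<Sum>p\<in>off_diag I. if fst p = l then \<alpha> (snd p) else 0) = (\<Sum>j\<in>I - {l}. \<alpha> j)"
    by (simp add: sum.inter_filter[OF fO, symmetric] sum.reindex inj_on_def)
  have "{p\<in>off_diag I. snd p = l} = (\<lambda>j. (j, l)) ` (I - {l})"
    using assms by (auto simp: off_diag_def)
  then have second: "(\<Sum>p\<in>off_diag I. if snd p = l then \<alpha> (fst p) else 0) = (\<Sum>j\<in>I - {l}. \<alpha> j)"
    by (simp add: sum.inter_filter[OF fO, symmetric] sum.reindex inj_on_def)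
  show ?thesis
    unfolding pair_laplacian_def
    by (simp add: split sum.distrib first second \<alpha>_def cong: sum.cong)
qed

lemma sum_coords_fiber_mean:
  assumes "finite I" "X = rearrangements I x0" "(\<Sum>x\<in>X. f x) = 0" "l \<in> I" "x \<in> X"
  shows "(\<Sum>c\<in>I. fiber_mean X l f (x c)) = 0"
proof -
  define F where "F = fiber_mean X l f"
  define K where "K = (\<Sum>c\<in>I. F (x0 c))"
  have fX: "finite X" using assms finite_rearrangements by simp
  have invariant: "(\<Sum>c\<in>I. F (y c)) = K" if "y \<in> X" for y
    using sum_coords_rearrangement[OF assms(1)] that assms(2) by (simp add: K_def)
  have "real (card X) * K = (\<Sum>y\<in>X. \<Sum>c\<in>I. F (y c))"
    by (simp add: invariant)
  also have "\<dots> = (\<Sum>c\<in>I. \<Sum>y\<in>X. F (y c))"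
    by (rule sum.swap)
  also have "\<dots> = (\<Sum>c\<in>I. \<Sum>y\<in>X. F (y l))"
    by (rule sum.cong[OF refl]) (use sum_rearrangements_coord[OF _ assms(4)] assms(2) in simp)
  also have "\<dots> = 0"
    using sum_cond_mean[OF fX, of l f] assms(3) by (simp add: F_def cond_mean_def)
  finally have "K = 0"
    using fX assms(2,5) by (auto simp: card_gt_0_iff)
  then show ?thesis using invariant assms(5) by (simp add: F_def)
qed

lemma eigenfunction_cond_means:
  assumes "finite I" "card I \<ge> 3" "X = rearrangements I x0"
    and eigen: "\<forall>x\<in>X. pair_laplacian I f x = 2 * real (card I) * f x"
  shows "\<forall>x\<in>X. (real (card I) - 1) * (\<Sum>l\<in>I. cond_mean X l f x) = real (card I) * f x"
proof -
  define n where "n = real (card I)"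
  define U where "U = (\<Sum>x\<in>X. (f x)^2)"
  define S where "S = (\<Sum>l\<in>I. \<Sum>x\<in>X. (cond_mean X l f x)^2)"
  have n3: "n \<ge> 3" using assms(2) by (simp add: n_def)
  have fX: "finite X" using assms finite_rearrangements by simp
  have "(\<Sum>x\<in>X. f x * pair_laplacian I f x) = 2 * n * U"
    unfolding U_def sum_distrib_left by (rule sum.cong) (simp_all add: eigen n_def power2_eq_square)
  then have dirichlet: "dirichlet I X f = 4 * n * U"
    using sum_mult_pair_laplacian[OF assms(3), of f] by simp
  have "(\<Sum>x\<in>X. 2 * n * f x) = 0"
    using sum_pair_laplacian[OF assms(3), of f] eigen by (simp add: n_def)
  then have centred: "(\<Sum>x\<in>X. f x) = 0"
    using n3 by (simp flip: sum_distrib_left)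
  have "\<forall>l\<in>I. \<forall>x\<in>X. poincare_holds (I - {l}) x f"
    using poincare_inequality assms(1,2) by simp
  then have "4 * (n - 1) * (n * U - S) \<le> (n - 2) * (4 * n * U)"
    using cond_means_energy_bound[OF assms(1,3), where u = f] dirichlet by (simp add: n_def U_def S_def)
  then have "n * U \<le> (n - 1) * S"
    by (simp add: algebra_simps)
  then have "n * (n * U - (n - 1) * S) \<le> 0"
    using n3 by (simp add: mult_le_0_iff)
  then have "(\<Sum>x\<in>X. ((n - 1) * (\<Sum>l\<in>I. cond_mean X l f x) - n * f x)^2) \<le> 0"
    using cond_means_deviation_bound[OF assms(1) _ assms(3) centred] assms(2)
    by (fastforce simp: n_def U_def S_def)
  moreover have "0 \<le> (\<Sum>x\<in>X. ((n - 1) * (\<Sum>l\<in>I. cond_mean X l f x) - n * f x)^2)"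
    by (rule sum_nonneg) simp
  ultimately have "(\<Sum>x\<in>X. ((n - 1) * (\<Sum>l\<in>I. cond_mean X l f x) - n * f x)^2) = 0"
    by linarith
  then have "\<forall>x\<in>X. ((n - 1) * (\<Sum>l\<in>I. cond_mean X l f x) - n * f x)^2 = 0"
    using fX by (simp add: sum_nonneg_eq_0_iff)
  then show ?thesis by (simp add: n_def)
qed

lemma pair_laplacian_fiber_mean:
  assumes "finite I" "X = rearrangements I x0" "(\<Sum>x\<in>X. f x) = 0" "l \<in> I" "x \<in> X"
  shows "pair_laplacian I (\<lambda>y. fiber_mean X l f (y l)) x = 2 * real (card I) * fiber_mean X l f (x l)"
proof -
  have "(\<Sum>j\<in>I - {l}. fiber_mean X l f (x j)) = - fiber_mean X l f (x l)"
    using sum.remove[OF assms(1,4), of "\<lambda>j. fiber_mean X l f (x j)"] sum_coords_fiber_mean[OF assms]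
    by simp
  then show ?thesis
    using real_card_remove[OF assms(1,4)] assms(1,4)
    by (simp add: pair_laplacian_coord sum_subtractf algebra_simps)
qed

lemma cond_means_centred:
  assumes "finite X" "card I \<ge> 3"
    and means: "\<forall>x\<in>X. (real (card I) - 1) * (\<Sum>l\<in>I. cond_mean X l f x) = real (card I) * f x"
  shows "(\<Sum>x\<in>X. f x) = 0"
proof -
  define n where "n = real (card I)"
  have "(\<Sum>l\<in>I. \<Sum>x\<in>X. cond_mean X l f x) = (\<Sum>x\<in>X. \<Sum>l\<in>I. cond_mean X l f x)"
    by (rule sum.swap)
  then have "(n - 1) * (n * (\<Sum>x\<in>X. f x)) = (\<Sum>x\<in>X. (n - 1) * (\<Sum>l\<in>I. cond_mean X l f x))"
    by (simp add: sum_cond_mean[OF assms(1)] n_def sum_distrib_left)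
  also have "\<dots> = n * (\<Sum>x\<in>X. f x)"
    using means by (simp add: n_def sum_distrib_left)
  finally show ?thesis
    using assms(2) by (simp add: n_def algebra_simps)
qed

lemma cond_means_eigenfunction:
  assumes "finite I" "card I \<ge> 3" "X = rearrangements I x0"
    and means: "\<forall>x\<in>X. (real (card I) - 1) * (\<Sum>l\<in>I. cond_mean X l f x) = real (card I) * f x"
  shows "\<forall>x\<in>X. pair_laplacian I f x = 2 * real (card I) * f x"
proof
  fix x assume x: "x \<in> X"
  define n where "n = real (card I)"
  define F where "F l = fiber_mean X l f" for l
  have centred: "(\<Sum>x\<in>X. f x) = 0"
    using cond_means_centred[OF _ assms(2) means] assms finite_rearrangements by simp
  have swapped: "swap_pair p x \<in> X" if "p \<in> off_diag I" for p
    using swapc_rearrangements[of "fst p" I "snd p" x x0] that x assms(3) by (auto simp: off_diag_def)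
  have expand: "n * f y = (n - 1) * (\<Sum>l\<in>I. F l (y l))" if "y \<in> X" for y
    using means that by (simp add: n_def F_def cond_mean_def)
  have "n * pair_laplacian I f x = (\<Sum>p\<in>off_diag I. n * f x - n * f (swap_pair p x))"
    by (simp add: pair_laplacian_def sum_distrib_left right_diff_distrib)
  also have "\<dots> = (\<Sum>p\<in>off_diag I.
      (n - 1) * (\<Sum>l\<in>I. F l (x l)) - (n - 1) * (\<Sum>l\<in>I. F l (swap_pair p x l)))"
    by (rule sum.cong[OF refl]) (simp add: expand[OF x] expand[OF swapped])
  also have "\<dots> = (n - 1) * (\<Sum>p\<in>off_diag I. \<Sum>l\<in>I. F l (x l) - F l (swap_pair p x l))"
    by (simp only: sum_subtractf right_diff_distrib sum_distrib_left)
  also have "\<dots> = (n - 1) * (\<Sum>l\<in>I. pair_laplacian I (\<lambda>y. F l (y l)) x)"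
    by (simp add: pair_laplacian_def sum.swap[of _ "off_diag I"])
  also have "(\<Sum>l\<in>I. pair_laplacian I (\<lambda>y. F l (y l)) x) = 2 * n * (\<Sum>l\<in>I. F l (x l))"
    unfolding sum_distrib_left
    by (rule sum.cong) (simp_all add: F_def n_def pair_laplacian_fiber_mean[OF assms(1,3) centred _ x])
  also have "(n - 1) * (2 * n * (\<Sum>l\<in>I. F l (x l))) = 2 * n * ((n - 1) * (\<Sum>l\<in>I. F l (x l)))"
    by (simp add: algebra_simps)
  also have "\<dots> = n * (2 * n * f x)"
    by (simp add: expand[OF x, symmetric])
  finally show "pair_laplacian I f x = 2 * real (card I) * f x"
    using assms(2) by (simp add: n_def)
qed

section \<open>The multislice\<close>

lemma swapc_changed_coords: "i \<noteq> j \<Longrightarrow> x i \<noteq> x j \<Longrightarrow> {k. swapc i j x k \<noteq> x k} = {i, j}"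
  by (auto simp: swapc_def)

lemma laplacian_eq_pair_laplacian:
  "laplacian N f x = pair_laplacian {0..<N} f x / 2"
proof -
  define P where "P = {p. fst p < snd p \<and> snd p < N}"
  define Q where "Q = {p \<in> P. x (fst p) \<noteq> x (snd p)}"
  have fP: "finite P" by (rule finite_subset[of _ "{0..<N} \<times> {0..<N}"]) (auto simp: P_def)
  have "neighbours N x = (\<lambda>p. swap_pair p x) ` Q"
    by (auto simp: neighbours_def Q_def P_def image_iff swapc_eq_self_iff) (metis fst_conv snd_conv)
  moreover have "inj_on (\<lambda>p. swap_pair p x) Q"
  proof (rule inj_onI)
    fix p q assume pq: "p \<in> Q" "q \<in> Q" "swap_pair p x = swap_pair q x"
    then have "{fst p, snd p} = {fst q, snd q}"
      using swapc_changed_coords[of "fst p" "snd p" x] swapc_changed_coords[of "fst q" "snd q" x]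
      by (auto simp: Q_def P_def)
    then show "p = q" using pq(1,2) by (auto simp: Q_def P_def doubleton_eq_iff prod_eq_iff)
  qed
  ultimately have "laplacian N f x = (\<Sum>p\<in>Q. f x - f (swap_pair p x))"
    by (simp add: laplacian_def sum.reindex)
  also have "\<dots> = (\<Sum>p\<in>P. f x - f (swap_pair p x))"
    by (rule sum.mono_neutral_left[OF fP]) (auto simp: Q_def, metis swapc_eq_self_iff)
  finally have half: "laplacian N f x = (\<Sum>p\<in>P. f x - f (swap_pair p x))" .
  have "off_diag {0..<N} = P \<union> prod.swap ` P" by (auto simp: off_diag_def P_def image_iff)
  moreover have "P \<inter> prod.swap ` P = {}" by (auto simp: P_def)
  ultimately have "pair_laplacian {0..<N} f x
      = (\<Sum>p\<in>P. f x - f (swap_pair p x)) + (\<Sum>p\<in>prod.swap ` P. f x - f (swap_pair p x))"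
    unfolding pair_laplacian_def by (simp add: sum.union_disjoint fP)
  also have "(\<Sum>p\<in>prod.swap ` P. f x - f (swap_pair p x)) = (\<Sum>p\<in>P. f x - f (swap_pair p x))"
    by (simp add: sum.reindex swapc_commute)
  finally show ?thesis using half by simp
qed

lemma multislice_subset_rearrangements:
  assumes "x0 \<in> multislice N r e k"
  shows "multislice N r e k \<subseteq> rearrangements {0..<N} x0"
proof
  fix y assume "y \<in> multislice N r e k"
  then have y: "y \<in> {0..<N} \<rightarrow>\<^sub>E e ` {0..<r}" "\<forall>m<r. card {i \<in> {0..<N}. y i = e m} = k m"
    by (auto simp: multislice_def)
  have x0: "x0 \<in> {0..<N} \<rightarrow>\<^sub>E e ` {0..<r}" "\<forall>m<r. card {i \<in> {0..<N}. x0 i = e m} = k m"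
    using assms by (auto simp: multislice_def)
  have no_count: "card {i \<in> {0..<N}. z i = v} = 0"
    if "z \<in> {0..<N} \<rightarrow>\<^sub>E e ` {0..<r}" "v \<notin> e ` {0..<r}" for z v
    using that by (fastforce simp: PiE_def Pi_def)
  have "card {i \<in> {0..<N}. y i = v} = card {i \<in> {0..<N}. x0 i = v}" for v
  proof (cases "v \<in> e ` {0..<r}")
    case True
    then show ?thesis using x0(2) y(2) by auto
  next
    case False
    then show ?thesis by (simp only: no_count[OF y(1) False] no_count[OF x0(1) False])
  qed
  moreover have "\<forall>i. i \<notin> {0..<N} \<longrightarrow> y i = x0 i"
    using y(1) x0(1) by (auto simp: PiE_def extensional_def)
  ultimately show "y \<in> rearrangements {0..<N} x0" by (simp add: rearrangements_def)
qed

lemma rearrangements_subset_multislice: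
  assumes "x0 \<in> multislice N r e k"
  shows "rearrangements {0..<N} x0 \<subseteq> multislice N r e k"
proof
  fix y assume y: "y \<in> rearrangements {0..<N} x0"
  have x0: "x0 \<in> {0..<N} \<rightarrow>\<^sub>E e ` {0..<r}" "\<forall>m<r. card {i \<in> {0..<N}. x0 i = e m} = k m"
    using assms by (auto simp: multislice_def)
  have "y i \<in> e ` {0..<r}" if "i \<in> {0..<N}" for i
    using rearrangements_range[OF _ y that] x0(1) by (auto simp: PiE_def Pi_def)
  moreover have "y i = undefined" if "i \<notin> {0..<N}" for i
    using y that x0(1) by (auto simp: rearrangements_def PiE_def extensional_def)
  moreover have "\<forall>m<r. card {i \<in> {0..<N}. y i = e m} = k m"
    using y x0(2) by (simp add: rearrangements_def)
  ultimately show "y \<in> multislice N r e k"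
    by (auto simp: multislice_def PiE_def extensional_def)
qed

lemma projP_eq_cond_means:
  "projP N r e k f x = (\<Sum>l\<in>{0..<N}. cond_mean (multislice N r e k) l f x) / real N"
  by (simp add: projP_def proj1_def cond_mean_def fiber_mean_def Let_def atLeast0LessThan)

theorem mainTheorem8:
  fixes N r :: nat and e :: "nat \<Rightarrow> real" and k :: "nat \<Rightarrow> nat"
    and f :: "(nat \<Rightarrow> real) \<Rightarrow> real"
  assumes "N \<ge> 3" and "r \<ge> 2" and "inj_on e {0..<r}"
    and "\<forall>m<r. k m \<ge> 1" and "(\<Sum>m<r. k m) = N"
  shows "(\<forall>x \<in> multislice N r e k. laplacian N f x = real N * f x) \<longleftrightarrow>
         (\<forall>x \<in> multislice N r e k. projP N r e k f x = f x / (real N - 1))"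
proof (cases "multislice N r e k = {}")
  case False
  then obtain x0 where x0: "x0 \<in> multislice N r e k" by blast
  define X where "X = multislice N r e k"
  have X: "X = rearrangements {0..<N} x0"
    using multislice_subset_rearrangements[OF x0] rearrangements_subset_multislice[OF x0]
    by (simp add: X_def)
  have card: "card {0..<N} \<ge> 3" using assms(1) by simp
  have laplacian: "laplacian N f x = real N * f x
      \<longleftrightarrow> pair_laplacian {0..<N} f x = 2 * real (card {0..<N}) * f x" for x
    by (auto simp: laplacian_eq_pair_laplacian)
  have projection: "projP N r e k f x = f x / (real N - 1)
      \<longleftrightarrow> (real (card {0..<N}) - 1) * (\<Sum>l\<in>{0..<N}. cond_mean X l f x) = real (card {0..<N}) * f x" for x
    using assms(1) by (simp add: projP_eq_cond_means X_def field_simps)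
  show ?thesis
    unfolding X_def[symmetric] laplacian projection
    using eigenfunction_cond_means[OF _ card X] cond_means_eigenfunction[OF _ card X] by blast
qed simp

end
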